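(* Let $(\Omega,\mathcal F,\mathbb P)$ be a probability space. For each $N\in\mathbb N$ let $\{t_j\}_{j\in\mathbb N}=\{t_j^{(N)}\}_{j\in\mathbb N}$ be a sequence of positive random variables on this space (the dependence on $N$ is suppressed in the notation) satisfying: (i) $\mathbb E(t_i)=\frac1N$ for all $i$ and all $N$; (ii) there exist $r>0$ and a constant $\tilde C>0$ such that $\mathbb E(t_i^{2+r})\le \frac{\tilde C}{N^{2+r}}$ for all $i$ and all $N$; (iii) for all $m\in\mathbb N$ (and all $N$), the vector $(t_1,\dots,t_m)$ is negatively superadditive dependent. Set $\tau_0=0$ and $\tau_i=\sum_{j=1}^i t_j$ for $i\ge1$. Let $W=(W_s)_{s\ge0}$ be a random function on the same probability space that is almost surely continuous, let $a\in\mathbb R$, and consider observations $$Y_{\tau_i}=a\tau_i+W_{\tau_i}-W_{\tau_{i-1}},\qquad i=1,\dots,N,$$ with estimator $$\hat a_{N}=\frac{\sum_{i=1}^{N}Y_{\tau_i}\tau_i}{\sum_{i=1}^{N}\tau_i^2}.$$ Then, almost surely as $N\to\infty$, $$N\big(\hat a_{N}-a\big)\to 3\int_0^1 (W_1-W_s)\,ds.$$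
   Context: A function $\phi:\mathbb R^m\to\mathbb R$ is superadditive if $\phi(x\vee y)+\phi(x\wedge y)\ge\phi(x)+\phi(y)$ for all $x,y\in\mathbb R^m$, where $\vee$ and $\wedge$ denote componentwise maximum and minimum. A random vector $(X_1,\dots,X_m)$ is negatively superadditive dependent (NSD) if for every superadditive $\phi$ such that the expectation $\mathbb E\phi(X_1,\dots,X_m)$ exists, $\mathbb E\phi(X_1,\dots,X_m)\le\mathbb E\phi(X_1^*,\dots,X_m^* )$, where $X_1^*,\dots,X_m^*$ are independent and $X_i^*$ has the same distribution as $X_i$ for each $i$. *)

theory Defs
  imports "HOL-Probability.Probability"
begin

text \<open>Vectors in R^m are represented as functions on a finite index set I
(extensional outside I). Componentwise max/min are sup/inf of functions.\<close>

definition superadditive_on :: "'i set \<Rightarrow> (('i \<Rightarrow> real) \<Rightarrow> real) \<Rightarrow> bool" where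
  "superadditive_on I \<phi> \<longleftrightarrow>
     (\<forall>x \<in> PiE I (\<lambda>_. UNIV). \<forall>y \<in> PiE I (\<lambda>_. UNIV).
        \<phi> (sup x y) + \<phi> (inf x y) \<ge> \<phi> x + \<phi> y)"

text \<open>Negative superadditive dependence of the family (X i) for i in I:
for every (Borel measurable) superadditive phi for which the expectations exist,
E phi(X) \<le> E phi(X*), where X* has independent components with the same marginals,
i.e. law of X* is the product of the marginal laws.\<close>

definition NSD :: "'a measure \<Rightarrow> 'i set \<Rightarrow> ('i \<Rightarrow> 'a \<Rightarrow> real) \<Rightarrow> bool" where
  "NSD M I X \<longleftrightarrow>
     (\<forall>\<phi>. superadditive_on I \<phi>
        \<and> \<phi> \<in> borel_measurable (PiM I (\<lambda>_. borel))
        \<and> integrable M (\<lambda>\<omega>. \<phi> (restrict (\<lambda>i. X i \<omega>) I))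
        \<and> integrable (PiM I (\<lambda>i. distr M borel (X i))) \<phi>
        \<longrightarrow> (\<integral>\<omega>. \<phi> (restrict (\<lambda>i. X i \<omega>) I) \<partial>M)
            \<le> (\<integral>x. \<phi> x \<partial>(PiM I (\<lambda>i. distr M borel (X i)))))"

end

theory Submission
  imports Defs
begin

text \<open>
  The partial sums \<open>\<tau>\<^sub>i\<close> of the \<open>N\<close>-th row stay uniformly close to the grid \<open>i/N\<close>.
  Negative superadditive dependence applies to the superadditive functions
  \<open>x \<mapsto> exp (\<Sum>i. f (x i))\<close> with \<open>f\<close> monotone, so exponential moments of such sums are
  dominated by those of independent copies. This yields Chernoff bounds for the lower tail of
  \<open>\<tau>\<^sub>m\<close> and for the upper tail of its truncation at level \<open>N powr -\<theta>\<close>; the truncation only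
  matters if a single \<open>t\<^sub>j\<close> exceeds that level, which by the \<open>(2 + r)\<close>-th moment has
  probability \<open>O(N powr (-2 - r/2))\<close>. By Borel-Cantelli, almost surely
  \<open>max (i \<le> N) \<bar>\<tau>\<^sub>i - i/N\<bar> \<le> N powr (-\<theta>/2)\<close> for all large \<open>N\<close>.

  Along such near-uniform partitions the error is deterministic: \<open>N\<close> times the estimation error is
  \<open>\<Sum>i. (W \<tau>\<^sub>i - W \<tau>\<^sub>i\<^sub>-\<^sub>1) \<tau>\<^sub>i\<close> divided by \<open>(\<Sum>i. \<tau>\<^sub>i\<^sup>2) / N\<close>. Summation by parts turns the
  numerator into \<open>W \<tau>\<^sub>N \<tau>\<^sub>N\<close> minus a left Riemann sum of \<open>W\<close>, so it tends to
  \<open>W 1 - \<integral>\<^sub>0\<^sup>1 W\<close>, while the denominator tends to \<open>\<integral>\<^sub>0\<^sup>1 s\<^sup>2 ds = 1/3\<close>.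
\<close>

section \<open>Near-uniform partitions\<close>

lemma sum_diff_pred_telescope:
  fixes f :: "nat \<Rightarrow> 'a::ab_group_add"
  shows "(\<Sum>i=1..n. f i - f (i - 1)) = f n - f 0"
  by (induction n) auto

lemma sum_diff_mult_by_parts:
  fixes f g :: "nat \<Rightarrow> 'a::comm_ring"
  shows "(\<Sum>i=1..n. (f i - f (i - 1)) * g i)
           = f n * g n - f 0 * g 0 - (\<Sum>i=1..n. f (i - 1) * (g i - g (i - 1)))"
  by (induction n) (auto simp: algebra_simps)

lemma sum_of_squares_real: "(\<Sum>i=1..n. (real i)\<^sup>2) = real n * (real n + 1) * (2 * real n + 1) / 6"
  by (induction n) (auto simp: algebra_simps power2_eq_square add_divide_distrib)

lemma riemann_sum_squares_tendsto: "(\<lambda>n. (\<Sum>i=1..n. (real i / real n)\<^sup>2) / real n) \<longlonglongrightarrow> 1/3"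
proof -
  have "(\<lambda>n. 1/3 + 1/2 * inverse (real n) + 1/6 * inverse (real n) ^ 2) \<longlonglongrightarrow> 1/3 + 1/2 * 0 + 1/6 * 0 ^ 2"
    by (intro tendsto_intros lim_inverse_n)
  moreover have "eventually (\<lambda>n. 1/3 + 1/2 * inverse (real n) + 1/6 * inverse (real n) ^ 2
      = (\<Sum>i=1..n. (real i / real n)\<^sup>2) / real n) sequentially"
  proof (rule eventually_sequentiallyI[of 1])
    fix n :: nat assume "1 \<le> n"
    have "(\<Sum>i=1..n. (real i / real n)\<^sup>2) = (\<Sum>i=1..n. (real i)\<^sup>2) / (real n)\<^sup>2"
      by (simp add: power_divide sum_divide_distrib)
    with \<open>1 \<le> n\<close> show "1/3 + 1/2 * inverse (real n) + 1/6 * inverse (real n) ^ 2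
        = (\<Sum>i=1..n. (real i / real n)\<^sup>2) / real n"
      unfolding sum_of_squares_real by (simp add: field_simps power2_eq_square power3_eq_cube)
  qed
  ultimately show ?thesis
    using Lim_transform_eventually by fastforce
qed

lemma chain_mono:
  fixes T :: "nat \<Rightarrow> 'a::order"
  assumes steps: "\<And>i. i \<in> {1..n} \<Longrightarrow> T (i - 1) \<le> T i" and "i \<le> j" "j \<le> n"
  shows "T i \<le> T j"
  using assms(2,3)
proof (induction j rule: dec_induct)
  case (step j)
  then show ?case using steps[of "Suc j"] by auto
qed simp

lemma integral_minus_left_rectangle_le:
  fixes f :: "real \<Rightarrow> real"
  assumes f: "continuous_on {a..b} f" and "a \<le> b"
    and osc: "\<And>s. s \<in> {a..b} \<Longrightarrow> \<bar>f s - f a\<bar> \<le> \<epsilon>"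
  shows "\<bar>integral {a..b} f - f a * (b - a)\<bar> \<le> \<epsilon> * (b - a)"
proof -
  have "integral {a..b} (\<lambda>s. f s - f a) = integral {a..b} f - f a * (b - a)"
    using integral_diff[OF integrable_continuous_interval[OF f] integrable_const_ivl] \<open>a \<le> b\<close>
    by simp
  moreover have "norm (integral {a..b} (\<lambda>s. f s - f a)) \<le> integral {a..b} (\<lambda>s. \<epsilon>)"
    using osc f by (intro integral_norm_bound_integral integrable_continuous_interval)
      (auto intro: continuous_intros)
  ultimately show ?thesis using \<open>a \<le> b\<close> by (simp add: mult.commute)
qed

lemma left_riemann_sum_error:
  fixes f :: "real \<Rightarrow> real" and T :: "nat \<Rightarrow> real"
  assumes f: "continuous_on {T 0..T n} f"
    and steps: "\<And>i. i \<in> {1..n} \<Longrightarrow> T (i - 1) \<le> T i"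
    and osc: "\<And>i s. i \<in> {1..n} \<Longrightarrow> s \<in> {T (i - 1)..T i} \<Longrightarrow> \<bar>f s - f (T (i - 1))\<bar> \<le> \<epsilon>"
  shows "\<bar>(\<Sum>i=1..n. f (T (i - 1)) * (T i - T (i - 1))) - integral {T 0..T n} f\<bar> \<le> \<epsilon> * (T n - T 0)"
proof -
  define G where "G x = integral {T 0..x} f" for x
  have range: "T 0 \<le> T i" "T i \<le> T n" if "i \<le> n" for i
    using chain_mono[of n T, OF steps] that by auto
  have piece: "\<bar>f (T (i - 1)) * (T i - T (i - 1)) - (G (T i) - G (T (i - 1)))\<bar>
      \<le> \<epsilon> * (T i - T (i - 1))" if i: "i \<in> {1..n}" for i
  proof -
    have sub: "{T (i - 1)..T i} \<subseteq> {T 0..T n}" using range i by auto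
    have "integral {T 0..T (i - 1)} f + integral {T (i - 1)..T i} f = integral {T 0..T i} f"
      using range[of "i - 1"] range[of i] i steps[OF i]
      by (intro Henstock_Kurzweil_Integration.integral_combine integrable_continuous_interval
          continuous_on_subset[OF f]) auto
    then have "G (T i) - G (T (i - 1)) = integral {T (i - 1)..T i} f"
      by (simp add: G_def)
    moreover have "\<bar>integral {T (i - 1)..T i} f - f (T (i - 1)) * (T i - T (i - 1))\<bar> \<le> \<epsilon> * (T i - T (i - 1))"
      using continuous_on_subset[OF f sub] steps[OF i] osc[OF i]
      by (rule integral_minus_left_rectangle_le)
    ultimately show ?thesis by (simp add: abs_minus_commute)
  qed
  have "integral {T 0..T n} f = (\<Sum>i=1..n. G (T i) - G (T (i - 1)))"
    using sum_diff_pred_telescope[of "\<lambda>i. G (T i)" n] by (simp add: G_def)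
  then have "\<bar>(\<Sum>i=1..n. f (T (i - 1)) * (T i - T (i - 1))) - integral {T 0..T n} f\<bar>
      = \<bar>\<Sum>i=1..n. f (T (i - 1)) * (T i - T (i - 1)) - (G (T i) - G (T (i - 1)))\<bar>"
    by (simp add: sum_subtractf)
  also have "\<dots> \<le> (\<Sum>i=1..n. \<epsilon> * (T i - T (i - 1)))"
    by (rule order.trans[OF sum_abs sum_mono]) (use piece in auto)
  also have "\<dots> = \<epsilon> * (T n - T 0)"
    using sum_diff_pred_telescope[of T n] by (simp add: sum_distrib_left[symmetric])
  finally show ?thesis .
qed

definition grid_deviation :: "(nat \<Rightarrow> real) \<Rightarrow> nat \<Rightarrow> real" where
  "grid_deviation T n = (MAX i\<in>{..n}. \<bar>T i - real i / real n\<bar>)"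

lemma grid_deviation_ge: "i \<le> n \<Longrightarrow> \<bar>T i - real i / real n\<bar> \<le> grid_deviation T n"
  unfolding grid_deviation_def by (rule Max_ge) auto

lemma grid_deviation_nonneg: "0 \<le> grid_deviation T n"
  using grid_deviation_ge[of 0 n T] by linarith

lemma grid_deviation_le_iff: "grid_deviation T n \<le> e \<longleftrightarrow> (\<forall>i\<le>n. \<bar>T i - real i / real n\<bar> \<le> e)"
  unfolding grid_deviation_def by (subst Max_le_iff) auto

lemma borel_measurable_grid_deviation:
  assumes "\<And>i. i \<le> n \<Longrightarrow> (\<lambda>x. T x i) \<in> borel_measurable M"
  shows "(\<lambda>x. grid_deviation (T x) n) \<in> borel_measurable M"
  unfolding grid_deviation_def using assms by (intro borel_measurable_Max) auto

locale near_uniform_partitions =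
  fixes T :: "nat \<Rightarrow> nat \<Rightarrow> real"
  assumes start: "T n 0 = 0"
    and steps: "\<And>n i. i \<in> {1..n} \<Longrightarrow> T n (i - 1) \<le> T n i"
    and deviation_tendsto: "(\<lambda>n. grid_deviation (T n) n) \<longlonglongrightarrow> 0"
begin

abbreviation dev :: "nat \<Rightarrow> real" where
  "dev n \<equiv> grid_deviation (T n) n"

lemma nonneg: "i \<le> n \<Longrightarrow> 0 \<le> T n i"
  using chain_mono[of n "T n" 0 i] steps start by auto

lemma eventually_le_2: "eventually (\<lambda>n. \<forall>i\<le>n. T n i \<le> 2) sequentially"
  using order_tendstoD(2)[OF deviation_tendsto zero_less_one]
proof (rule eventually_mono)
  fix n assume "dev n < 1"
  show "\<forall>i\<le>n. T n i \<le> 2"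
  proof safe
    fix i assume "i \<le> n"
    then have "real i / real n \<le> 1" by (cases "n = 0") auto
    with grid_deviation_ge[OF \<open>i \<le> n\<close>, of "T n"] \<open>dev n < 1\<close> show "T n i \<le> 2" by linarith
  qed
qed

lemma step_le:
  assumes i: "i \<in> {1..n}"
  shows "T n i - T n (i - 1) \<le> 1 / real n + 2 * dev n"
proof -
  have "\<bar>T n i - real i / real n\<bar> \<le> dev n"
    by (rule grid_deviation_ge) (use i in auto)
  moreover have "\<bar>T n (i - 1) - real (i - 1) / real n\<bar> \<le> dev n"
    by (rule grid_deviation_ge) (use i in auto)
  moreover have "real (i - 1) / real n = real i / real n - 1 / real n"
    using i by (simp add: of_nat_diff diff_divide_distrib)
  ultimately show ?thesis by (simp add: abs_le_iff)
qed

lemma last_tendsto: "(\<lambda>n. T n n) \<longlonglongrightarrow> 1"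
proof -
  have "(\<lambda>n. T n n - 1) \<longlonglongrightarrow> 0"
  proof (rule Lim_null_comparison[OF _ deviation_tendsto])
    show "eventually (\<lambda>n. norm (T n n - 1) \<le> dev n) sequentially"
    proof (rule eventually_sequentiallyI[of 1])
      fix n :: nat assume "1 \<le> n"
      then show "norm (T n n - 1) \<le> dev n" using grid_deviation_ge[of n n "T n"] by simp
    qed
  qed
  then show ?thesis by (simp add: LIM_zero_iff)
qed

lemma mean_square_tendsto: "(\<lambda>n. (\<Sum>i=1..n. (T n i)\<^sup>2) / real n) \<longlonglongrightarrow> 1/3"
proof -
  have "(\<lambda>n. (\<Sum>i=1..n. (T n i)\<^sup>2) / real n - (\<Sum>i=1..n. (real i / real n)\<^sup>2) / real n) \<longlonglongrightarrow> 0"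
  proof (rule Lim_null_comparison)
    show "(\<lambda>n. dev n * (2 + dev n)) \<longlonglongrightarrow> 0"
      using tendsto_mult[OF deviation_tendsto tendsto_add[OF tendsto_const deviation_tendsto]] by simp
    show "eventually (\<lambda>n. norm ((\<Sum>i=1..n. (T n i)\<^sup>2) / real n - (\<Sum>i=1..n. (real i / real n)\<^sup>2) / real n)
        \<le> dev n * (2 + dev n)) sequentially"
    proof (rule eventually_sequentiallyI[of 1])
      fix n :: nat assume "1 \<le> n"
      have term_le: "\<bar>(T n i)\<^sup>2 - (real i / real n)\<^sup>2\<bar> \<le> dev n * (2 + dev n)" if "i \<in> {1..n}" for i
      proof -
        have d: "\<bar>T n i - real i / real n\<bar> \<le> dev n" using grid_deviation_ge that by auto
        have "0 \<le> real i / real n" "real i / real n \<le> 1" using that by auto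
        with d have "\<bar>T n i + real i / real n\<bar> \<le> 2 + dev n" unfolding abs_le_iff by linarith
        then have "\<bar>T n i - real i / real n\<bar> * \<bar>T n i + real i / real n\<bar> \<le> dev n * (2 + dev n)"
          using d by (intro mult_mono) auto
        then show ?thesis by (simp add: power2_eq_square abs_mult[symmetric] algebra_simps)
      qed
      have "\<bar>\<Sum>i=1..n. (T n i)\<^sup>2 - (real i / real n)\<^sup>2\<bar> \<le> (\<Sum>i=1..n. dev n * (2 + dev n))"
        by (rule order.trans[OF sum_abs sum_mono]) (use term_le in auto)
      then show "norm ((\<Sum>i=1..n. (T n i)\<^sup>2) / real n - (\<Sum>i=1..n. (real i / real n)\<^sup>2) / real n)
          \<le> dev n * (2 + dev n)"
        using \<open>1 \<le> n\<close> by (simp add: sum_subtractf abs_divide divide_le_eq mult.commute flip: diff_divide_distrib)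
    qed
  qed
  from tendsto_add[OF this riemann_sum_squares_tendsto] show ?thesis by simp
qed

lemma eventually_left_riemann_sum_close:
  fixes f :: "real \<Rightarrow> real"
  assumes f: "continuous_on {0..} f" and "0 < \<epsilon>"
  shows "eventually (\<lambda>n. \<bar>(\<Sum>i=1..n. f (T n (i - 1)) * (T n i - T n (i - 1))) - integral {0..T n n} f\<bar>
           \<le> 2 * \<epsilon>) sequentially"
proof -
  have f2: "continuous_on {0..2} f" using f by (rule continuous_on_subset) auto
  obtain \<eta> where "\<eta> > 0"
    and \<eta>: "\<And>x y. x \<in> {0..2} \<Longrightarrow> y \<in> {0..2} \<Longrightarrow> dist y x < \<eta> \<Longrightarrow> dist (f y) (f x) < \<epsilon>"
    using compact_uniformly_continuous[OF f2 compact_Icc, unfolded uniformly_continuous_on_def,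
        rule_format, of \<epsilon>] \<open>\<epsilon> > 0\<close> by auto
  have "(\<lambda>n. 1 / real n + 2 * dev n) \<longlonglongrightarrow> 0 + 2 * 0"
    by (intro tendsto_intros deviation_tendsto)
  then have "eventually (\<lambda>n. 1 / real n + 2 * dev n < \<eta>) sequentially"
    using \<open>\<eta> > 0\<close> by (simp add: order_tendsto_iff)
  with eventually_le_2 show ?thesis
  proof eventually_elim
    case (elim n)
    have "\<bar>f s - f (T n (i - 1))\<bar> \<le> \<epsilon>" if i: "i \<in> {1..n}" and s: "s \<in> {T n (i - 1)..T n i}" for i s
    proof -
      have "T n (i - 1) \<in> {0..2}" "s \<in> {0..2}"
        using i s elim(1) nonneg[of "i - 1" n] by force+
      moreover have "dist s (T n (i - 1)) < \<eta>"
        using s step_le[OF i] elim(2) by (simp add: dist_real_def)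
      ultimately show ?thesis using \<eta> by (simp add: dist_real_def less_imp_le)
    qed
    moreover have "continuous_on {T n 0..T n n} f"
      using f by (rule continuous_on_subset) (auto simp: start)
    ultimately have "\<bar>(\<Sum>i=1..n. f (T n (i - 1)) * (T n i - T n (i - 1))) - integral {T n 0..T n n} f\<bar>
        \<le> \<epsilon> * (T n n - T n 0)"
      using steps by (intro left_riemann_sum_error) auto
    also have "\<dots> \<le> \<epsilon> * 2" using elim(1) \<open>\<epsilon> > 0\<close> by (simp add: start)
    finally show ?case by (simp add: start)
  qed
qed

lemma left_riemann_sum_tendsto:
  fixes f :: "real \<Rightarrow> real"
  assumes f: "continuous_on {0..} f"
  shows "(\<lambda>n. \<Sum>i=1..n. f (T n (i - 1)) * (T n i - T n (i - 1))) \<longlonglongrightarrow> integral {0..1} f"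
proof -
  have "continuous_on {0..2} (\<lambda>x. integral {0..x} f)"
    using f by (intro indefinite_integral_continuous_1 integrable_continuous_interval)
      (auto intro: continuous_on_subset)
  then have "(\<lambda>n. integral {0..T n n} f) \<longlonglongrightarrow> integral {0..1} f"
    using eventually_le_2 nonneg
    by (intro continuous_on_tendsto_compose[OF _ last_tendsto]) (auto elim!: eventually_mono)
  moreover have "(\<lambda>n. (\<Sum>i=1..n. f (T n (i - 1)) * (T n i - T n (i - 1))) - integral {0..T n n} f) \<longlonglongrightarrow> 0"
  proof (rule tendstoI)
    fix \<epsilon> :: real assume "\<epsilon> > 0"
    then have "\<epsilon> / 4 > 0" by simp
    from eventually_left_riemann_sum_close[OF f this] show "eventually (\<lambda>n.
        dist ((\<Sum>i=1..n. f (T n (i - 1)) * (T n i - T n (i - 1))) - integral {0..T n n} f) 0 < \<epsilon>) sequentially"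
      by eventually_elim (use \<open>\<epsilon> > 0\<close> in \<open>simp add: dist_real_def\<close>)
  qed
  ultimately show ?thesis
    using tendsto_add by fastforce
qed

lemma increment_sum_tendsto:
  fixes W :: "real \<Rightarrow> real"
  assumes W: "continuous_on {0..} W"
  shows "(\<lambda>n. \<Sum>i=1..n. (W (T n i) - W (T n (i - 1))) * T n i) \<longlonglongrightarrow> W 1 - integral {0..1} W"
proof -
  have "(\<lambda>n. W (T n n) * T n n - (\<Sum>i=1..n. W (T n (i - 1)) * (T n i - T n (i - 1))))
      \<longlonglongrightarrow> W 1 * 1 - integral {0..1} W"
    using W eventually_le_2 nonneg
    by (intro tendsto_intros last_tendsto left_riemann_sum_tendsto continuous_on_tendsto_compose[OF W])
      (auto elim!: eventually_mono)
  moreover have "(\<Sum>i=1..n. (W (T n i) - W (T n (i - 1))) * T n i)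
      = W (T n n) * T n n - (\<Sum>i=1..n. W (T n (i - 1)) * (T n i - T n (i - 1)))" for n
    using sum_diff_mult_by_parts[of "\<lambda>i. W (T n i)" "T n" n] by (simp add: start)
  ultimately show ?thesis by simp
qed

lemma least_squares_error_tendsto:
  fixes W :: "real \<Rightarrow> real" and a :: real
  assumes W: "continuous_on {0..} W"
  shows "(\<lambda>n. real n * ((\<Sum>i=1..n. (a * T n i + W (T n i) - W (T n (i - 1))) * T n i)
            / (\<Sum>i=1..n. (T n i)\<^sup>2) - a))
         \<longlonglongrightarrow> 3 * integral {0..1} (\<lambda>s. W 1 - W s)"
proof -
  define D where "D n = (\<Sum>i=1..n. (W (T n i) - W (T n (i - 1))) * T n i)" for n
  define Q where "Q n = (\<Sum>i=1..n. (T n i)\<^sup>2)" for n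
  have "(\<lambda>n. D n / (Q n / real n)) \<longlonglongrightarrow> (W 1 - integral {0..1} W) / (1/3)"
    unfolding D_def Q_def by (intro tendsto_divide increment_sum_tendsto mean_square_tendsto W) simp
  moreover have "eventually (\<lambda>n. D n / (Q n / real n) = real n * ((\<Sum>i=1..n. (a * T n i + W (T n i)
      - W (T n (i - 1))) * T n i) / (\<Sum>i=1..n. (T n i)\<^sup>2) - a)) sequentially"
    using order_tendstoD(1)[OF mean_square_tendsto zero_less_divide_1_iff[THEN iffD2, OF zero_less_numeral]]
  proof eventually_elim
    case (elim n)
    have "n \<noteq> 0" using elim by (intro notI) simp
    moreover from elim have "Q n \<noteq> 0" by (auto simp: Q_def)
    moreover have "(\<Sum>i=1..n. (a * T n i + W (T n i) - W (T n (i - 1))) * T n i) = a * Q n + D n"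
      unfolding Q_def D_def
      by (simp add: sum_distrib_left sum.distrib[symmetric] algebra_simps power2_eq_square)
    ultimately show ?case by (simp add: Q_def field_simps)
  qed
  moreover have "integral {0..1} (\<lambda>s. W 1 - W s) = W 1 - integral {0..1} W"
    using integrable_continuous_interval[OF continuous_on_subset[OF W], of 0 1]
    by (subst integral_diff) auto
  ultimately show ?thesis
    by (simp add: Lim_transform_eventually mult.commute)
qed

end

lemma near_uniform_partitions_partial_sums:
  fixes x :: "nat \<Rightarrow> nat \<Rightarrow> real" and e :: "nat \<Rightarrow> real"
  assumes "\<And>n j. j \<in> {1..n} \<Longrightarrow> 0 \<le> x n j"
    and "eventually (\<lambda>n. grid_deviation (\<lambda>i. \<Sum>j=1..i. x n j) n \<le> e n) sequentially"
    and "e \<longlonglongrightarrow> 0"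
  shows "near_uniform_partitions (\<lambda>n i. \<Sum>j=1..i. x n j)"
proof
  show "(\<Sum>j=1..i - 1. x n j) \<le> (\<Sum>j=1..i. x n j)" if "i \<in> {1..n}" for n i
    using that assms(1)[of i n] by (cases i) auto
  show "(\<lambda>n. grid_deviation (\<lambda>i. \<Sum>j=1..i. x n j) n) \<longlonglongrightarrow> 0"
    using assms(2) by (intro Lim_null_comparison[OF _ assms(3)])
      (auto elim!: eventually_mono simp: grid_deviation_nonneg)
qed simp

section \<open>Exponential bounds under negative superadditive dependence\<close>

lemma convex_pair_le:
  fixes h :: "real \<Rightarrow> real"
  assumes h: "convex_on UNIV h"
    and "Q \<le> u" "u \<le> P" "Q \<le> v" "v \<le> P" and sum: "u + v = P + Q"
  shows "h u + h v \<le> h P + h Q"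
proof (cases "P = Q")
  case False
  then have "P - Q > 0" using assms by auto
  define \<alpha> where "\<alpha> = (u - Q) / (P - Q)"
  have "0 \<le> \<alpha>" "\<alpha> \<le> 1" using assms \<open>P - Q > 0\<close> by (auto simp: \<alpha>_def field_simps)
  have "\<alpha> * (P - Q) = u - Q" using \<open>P - Q > 0\<close> by (simp add: \<alpha>_def)
  then have u: "u = (1 - \<alpha>) * Q + \<alpha> * P" and v: "v = \<alpha> * Q + (1 - \<alpha>) * P"
    using sum by (simp_all add: algebra_simps)
  have "h u \<le> (1 - \<alpha>) * h Q + \<alpha> * h P"
    using convex_onD[OF h, of \<alpha> Q P] \<open>0 \<le> \<alpha>\<close> \<open>\<alpha> \<le> 1\<close> u by simp
  moreover have "h v \<le> \<alpha> * h Q + (1 - \<alpha>) * h P"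
    unfolding v using convex_onD[OF h, of "1 - \<alpha>" Q P] \<open>0 \<le> \<alpha>\<close> \<open>\<alpha> \<le> 1\<close> by (simp add: algebra_simps)
  ultimately show ?thesis by (simp add: algebra_simps)
qed (use assms in auto)

lemma superadditive_on_convex_sum:
  fixes h f :: "real \<Rightarrow> real"
  assumes h: "convex_on UNIV h" and f: "mono f \<or> antimono f"
  shows "superadditive_on I (\<lambda>x. h (\<Sum>i\<in>I. f (x i)))"
  unfolding superadditive_on_def
proof (intro ballI)
  fix x y :: "'a \<Rightarrow> real"
  let ?S = "\<lambda>z. \<Sum>i\<in>I. f (z i)"
  have "f (max a b) + f (min a b) = f a + f b" for a b
    by (cases "a \<le> b") (auto simp: max_def min_def)
  \<comment> \<open>\<open>?S\<close> is modular, and its values at \<open>inf x y\<close> and \<open>sup x y\<close> bracket those at \<open>x\<close> and \<open>y\<close>.\<close>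
  then have modular: "?S x + ?S y = ?S (sup x y) + ?S (inf x y)"
    by (simp add: sup_max inf_min flip: sum.distrib)
  show "h (?S x) + h (?S y) \<le> h (?S (sup x y)) + h (?S (inf x y))"
    using f
  proof
    assume "mono f"
    then have "f (min a b) \<le> f a" "f (min a b) \<le> f b" "f a \<le> f (max a b)" "f b \<le> f (max a b)"
      for a b by (simp_all add: monoD)
    then have "?S (inf x y) \<le> ?S z \<and> ?S z \<le> ?S (sup x y)" if "z = x \<or> z = y" for z
      using that by (auto intro!: sum_mono simp: sup_max inf_min)
    then show ?thesis
      by (intro convex_pair_le[OF h]) (simp_all add: modular)
  next
    assume "antimono f"
    then have "f a \<le> f (min a b)" "f b \<le> f (min a b)" "f (max a b) \<le> f a" "f (max a b) \<le> f b"
      for a b by (simp_all add: antimonoD)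
    then have "?S (sup x y) \<le> ?S z \<and> ?S z \<le> ?S (inf x y)" if "z = x \<or> z = y" for z
      using that by (auto intro!: sum_mono simp: sup_max inf_min)
    then show ?thesis
      by (subst add.commute, intro convex_pair_le[OF h]) (simp_all add: modular)
  qed
qed

lemma exp_le_one_plus_quadratic:
  fixes y :: real
  assumes "y \<le> 1"
  shows "exp y \<le> 1 + y + y\<^sup>2"
proof (cases "0 \<le> y")
  case True
  then show ?thesis using exp_bound assms by blast
next
  case False
  define z where "z = - y"
  have "z > 0" using False by (simp add: z_def)
  have pos: "0 < 1 - z + z\<^sup>2"
    using sum_squares_ge_zero[of "z - 1/2" 0] by (simp add: power2_eq_square algebra_simps)
  have "1 \<le> (1 - z + z\<^sup>2) * (1 + z + z\<^sup>2 / 2)"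
  proof -
    have "(1 - z + z\<^sup>2) * (1 + z + z\<^sup>2 / 2) = 1 + z\<^sup>2 / 2 + z ^ 3 / 2 + z ^ 4 / 2"
      by (simp add: field_simps power2_eq_square power3_eq_cube power4_eq_xxxx)
    then show ?thesis using \<open>z > 0\<close> by simp
  qed
  also have "\<dots> \<le> (1 - z + z\<^sup>2) * exp z"
    using exp_lower_Taylor_quadratic[of z] \<open>z > 0\<close> pos by (intro mult_left_mono) auto
  finally have "exp (- z) \<le> 1 - z + z\<^sup>2"
    by (simp add: exp_minus field_simps)
  then show ?thesis by (simp add: z_def)
qed

lemma power2_le_powr_split:
  fixes x c r :: real
  assumes "0 \<le> x" "0 < c" "0 \<le> r"
  shows "x\<^sup>2 \<le> c\<^sup>2 + x powr (2 + r) / c powr r"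
proof (cases "x \<le> c")
  case True
  then have "x\<^sup>2 \<le> c\<^sup>2" using assms by (intro power_mono) auto
  then show ?thesis using assms by (simp add: add_increasing2)
next
  case False
  then have "1 \<le> (x / c) powr r" using assms by (intro ge_one_powr_ge_zero) auto
  then have "x\<^sup>2 * 1 \<le> x\<^sup>2 * (x / c) powr r" by (intro mult_left_mono) auto
  also have "\<dots> = x powr (2 + r) / c powr r"
    using assms False by (simp add: powr_add powr_divide flip: powr_numeral)
  finally show ?thesis by (simp add: add_increasing)
qed

context prob_space
begin

lemma expectation_exp_le:
  fixes Y :: "'a \<Rightarrow> real"
  assumes Y: "integrable M Y" and Y2: "integrable M (\<lambda>\<omega>. (Y \<omega>)\<^sup>2)"
    and le_1: "\<And>\<omega>. \<omega> \<in> space M \<Longrightarrow> Y \<omega> \<le> 1"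
  shows "expectation (\<lambda>\<omega>. exp (Y \<omega>)) \<le> exp (expectation Y + expectation (\<lambda>\<omega>. (Y \<omega>)\<^sup>2))"
proof -
  have "expectation (\<lambda>\<omega>. exp (Y \<omega>)) \<le> expectation (\<lambda>\<omega>. 1 + Y \<omega> + (Y \<omega>)\<^sup>2)"
  proof (rule integral_mono')
    fix \<omega> assume "\<omega> \<in> space M"
    then show "exp (Y \<omega>) \<le> 1 + Y \<omega> + (Y \<omega>)\<^sup>2" by (rule exp_le_one_plus_quadratic[OF le_1])
    show "0 \<le> 1 + Y \<omega> + (Y \<omega>)\<^sup>2"
      using sum_squares_ge_zero[of "Y \<omega> + 1/2" 0] by (simp add: power2_eq_square algebra_simps)
  qed (use Y Y2 in auto)
  also have "\<dots> = 1 + (expectation Y + expectation (\<lambda>\<omega>. (Y \<omega>)\<^sup>2))"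
    using Y Y2 by (simp add: prob_space)
  also have "\<dots> \<le> exp (expectation Y + expectation (\<lambda>\<omega>. (Y \<omega>)\<^sup>2))"
    by (rule exp_ge_add_one_self)
  finally show ?thesis .
qed

lemma integrable_powr_of_le:
  fixes X :: "'a \<Rightarrow> real"
  assumes X[measurable]: "X \<in> borel_measurable M" and nonneg: "\<And>\<omega>. \<omega> \<in> space M \<Longrightarrow> 0 \<le> X \<omega>"
    and int: "integrable M (\<lambda>\<omega>. X \<omega> powr p)" and "0 \<le> q" "q \<le> p"
  shows "integrable M (\<lambda>\<omega>. X \<omega> powr q)"
proof (rule Bochner_Integration.integrable_bound[OF Bochner_Integration.integrable_add[OF integrable_const[of 1] int]])
  have "X \<omega> powr q \<le> 1 + X \<omega> powr p" if "\<omega> \<in> space M" for \<omega>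
  proof (cases "X \<omega> \<le> 1")
    case True
    then have "X \<omega> powr q \<le> 1" using nonneg[OF that] \<open>0 \<le> q\<close> by (intro powr_le1) auto
    then show ?thesis by (simp add: add_increasing2)
  next
    case False
    then show ?thesis using \<open>q \<le> p\<close> by (simp add: add_increasing powr_mono)
  qed
  then show "AE \<omega> in M. norm (X \<omega> powr q) \<le> norm (1 + X \<omega> powr p)"
    by (intro AE_I2) auto
qed simp

lemma power2_moment_le:
  fixes X :: "'a \<Rightarrow> real"
  assumes X[measurable]: "X \<in> borel_measurable M" and nonneg: "\<And>\<omega>. \<omega> \<in> space M \<Longrightarrow> 0 \<le> X \<omega>"
    and int: "integrable M (\<lambda>\<omega>. X \<omega> powr (2 + r))" and "0 \<le> r" "0 < c"
  shows "integrable M (\<lambda>\<omega>. (X \<omega>)\<^sup>2)"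
    and "expectation (\<lambda>\<omega>. (X \<omega>)\<^sup>2) \<le> c\<^sup>2 + expectation (\<lambda>\<omega>. X \<omega> powr (2 + r)) / c powr r"
proof -
  have sq: "(X \<omega>)\<^sup>2 = X \<omega> powr 2" if "\<omega> \<in> space M" for \<omega>
    using nonneg[OF that] by (simp add: powr_numeral)
  show int2: "integrable M (\<lambda>\<omega>. (X \<omega>)\<^sup>2)"
    using integrable_powr_of_le[OF X nonneg int, of 2] \<open>0 \<le> r\<close>
    by (subst Bochner_Integration.integrable_cong[OF refl sq]) auto
  have "expectation (\<lambda>\<omega>. (X \<omega>)\<^sup>2) \<le> expectation (\<lambda>\<omega>. c\<^sup>2 + X \<omega> powr (2 + r) / c powr r)"
    using int2 int nonneg power2_le_powr_split \<open>0 \<le> r\<close> \<open>0 < c\<close> by (intro integral_mono) auto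
  also have "\<dots> = c\<^sup>2 + expectation (\<lambda>\<omega>. X \<omega> powr (2 + r)) / c powr r"
    using int by (simp add: prob_space)
  finally show "expectation (\<lambda>\<omega>. (X \<omega>)\<^sup>2) \<le> c\<^sup>2 + expectation (\<lambda>\<omega>. X \<omega> powr (2 + r)) / c powr r" .
qed

lemma prob_greater_le_powr_moment:
  fixes X :: "'a \<Rightarrow> real"
  assumes X[measurable]: "X \<in> borel_measurable M"
    and int: "integrable M (\<lambda>\<omega>. X \<omega> powr p)" and "0 < \<delta>" "0 \<le> p"
  shows "prob {\<omega> \<in> space M. \<delta> < X \<omega>} \<le> expectation (\<lambda>\<omega>. X \<omega> powr p) / \<delta> powr p"
proof -
  have "prob {\<omega> \<in> space M. \<delta> < X \<omega>} \<le> prob {\<omega> \<in> space M. \<delta> powr p \<le> X \<omega> powr p}"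
    using \<open>0 < \<delta>\<close> \<open>0 \<le> p\<close> by (intro finite_measure_mono) (auto intro: powr_mono2)
  also have "\<dots> \<le> expectation (\<lambda>\<omega>. X \<omega> powr p) / \<delta> powr p"
    using int \<open>0 < \<delta>\<close> by (intro integral_Markov_inequality_measure[OF _ sets.top]) auto
  finally show ?thesis .
qed

lemma PiM_distr_integral_prod:
  fixes X :: "'i \<Rightarrow> 'a \<Rightarrow> real" and g :: "real \<Rightarrow> real"
  assumes "finite I" and rv: "\<And>i. i \<in> I \<Longrightarrow> X i \<in> borel_measurable M"
    and g[measurable]: "g \<in> borel_measurable borel"
    and int: "\<And>i. i \<in> I \<Longrightarrow> integrable M (\<lambda>\<omega>. g (X i \<omega>))"
  shows "integrable (PiM I (\<lambda>i. distr M borel (X i))) (\<lambda>x. \<Prod>i\<in>I. g (x i))"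
    and "(\<integral>x. (\<Prod>i\<in>I. g (x i)) \<partial>PiM I (\<lambda>i. distr M borel (X i))) = (\<Prod>i\<in>I. expectation (\<lambda>\<omega>. g (X i \<omega>)))"
proof -
  \<comment> \<open>Outside \<open>I\<close> the marginals are replaced by point masses, so that every factor is a
    probability space, as \<open>product_sigma_finite\<close> requires.\<close>
  define Y where "Y i = (if i \<in> I then X i else (\<lambda>_. 0))" for i
  have Y_meas[measurable]: "Y i \<in> borel_measurable M" for i
    using rv by (simp add: Y_def)
  define D where "D i = distr M borel (Y i)" for i
  interpret D: prob_space "D i" for i
    unfolding D_def by (rule prob_space_distr) simp
  interpret product_sigma_finite D ..
  have PiM_eq: "PiM I (\<lambda>i. distr M borel (X i)) = PiM I D"
    by (rule PiM_cong) (auto simp: D_def Y_def intro!: distr_cong)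
  have int_D: "integrable (D i) g" if "i \<in> I" for i
    using int[OF that] that by (simp add: D_def integrable_distr_eq Y_def rv)
  show "integrable (PiM I (\<lambda>i. distr M borel (X i))) (\<lambda>x. \<Prod>i\<in>I. g (x i))"
    unfolding PiM_eq by (rule product_integrable_prod[OF \<open>finite I\<close> int_D])
  have "(\<integral>x. (\<Prod>i\<in>I. g (x i)) \<partial>PiM I D) = (\<Prod>i\<in>I. \<integral>x. g x \<partial>D i)"
    by (rule product_integral_prod[OF \<open>finite I\<close> int_D])
  also have "\<dots> = (\<Prod>i\<in>I. expectation (\<lambda>\<omega>. g (X i \<omega>)))"
    by (intro prod.cong refl) (simp add: D_def Y_def rv integral_distr)
  finally show "(\<integral>x. (\<Prod>i\<in>I. g (x i)) \<partial>PiM I (\<lambda>i. distr M borel (X i)))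
      = (\<Prod>i\<in>I. expectation (\<lambda>\<omega>. g (X i \<omega>)))"
    unfolding PiM_eq .
qed

lemma NSD_expectation_exp_sum_le:
  fixes X :: "'i \<Rightarrow> 'a \<Rightarrow> real" and f :: "real \<Rightarrow> real"
  assumes nsd: "NSD M I X" and "finite I"
    and rv: "\<And>i. i \<in> I \<Longrightarrow> X i \<in> borel_measurable M"
    and f: "mono f \<or> antimono f" and f_meas[measurable]: "f \<in> borel_measurable borel"
    and bounded: "\<And>i \<omega>. i \<in> I \<Longrightarrow> \<omega> \<in> space M \<Longrightarrow> f (X i \<omega>) \<le> B"
  shows "expectation (\<lambda>\<omega>. exp (\<Sum>i\<in>I. f (X i \<omega>))) \<le> (\<Prod>i\<in>I. expectation (\<lambda>\<omega>. exp (f (X i \<omega>))))"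
proof -
  define \<phi> where "\<phi> x = exp (\<Sum>i\<in>I. f (x i))" for x :: "'i \<Rightarrow> real"
  have \<phi>_prod: "\<phi> x = (\<Prod>i\<in>I. exp (f (x i)))" for x
    by (simp add: \<phi>_def exp_sum \<open>finite I\<close>)
  have int_X: "integrable M (\<lambda>\<omega>. exp (f (X i \<omega>)))" if "i \<in> I" for i
    using bounded[OF that] rv[OF that]
    by (intro integrable_const_bound[where B="exp B"]) (auto intro!: AE_I2)
  note PiM = PiM_distr_integral_prod[OF \<open>finite I\<close> rv _ int_X]
  have "(\<integral>\<omega>. \<phi> (restrict (\<lambda>i. X i \<omega>) I) \<partial>M) \<le> (\<integral>x. \<phi> x \<partial>PiM I (\<lambda>i. distr M borel (X i)))"
  proof (rule nsd[unfolded NSD_def, rule_format], intro conjI)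
    show "superadditive_on I \<phi>"
      unfolding \<phi>_def by (rule superadditive_on_convex_sum[OF exp_convex f])
    show "\<phi> \<in> borel_measurable (Pi\<^sub>M I (\<lambda>_. borel))"
      unfolding \<phi>_def using \<open>finite I\<close> by measurable
    have "norm (\<phi> (restrict (\<lambda>i. X i \<omega>) I)) \<le> (\<Prod>i\<in>I. exp B)" if "\<omega> \<in> space M" for \<omega>
    proof -
      have "(\<Prod>i\<in>I. exp (f (X i \<omega>))) \<le> (\<Prod>i\<in>I. exp B)"
        by (rule prod_mono) (use bounded[OF _ that] in auto)
      then show ?thesis by (simp add: \<phi>_prod abs_prod)
    qed
    then show "integrable M (\<lambda>\<omega>. \<phi> (restrict (\<lambda>i. X i \<omega>) I))"
      using rv \<open>finite I\<close> by (intro integrable_const_bound AE_I2) (auto simp: \<phi>_def)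
    show "integrable (Pi\<^sub>M I (\<lambda>i. distr M borel (X i))) \<phi>"
      unfolding \<phi>_prod by (rule PiM(1)) measurable
  qed
  also have "(\<integral>x. \<phi> x \<partial>PiM I (\<lambda>i. distr M borel (X i))) = (\<Prod>i\<in>I. expectation (\<lambda>\<omega>. exp (f (X i \<omega>))))"
    unfolding \<phi>_prod by (rule PiM(2)) measurable
  finally show ?thesis by (simp add: \<phi>_def)
qed

lemma NSD_chernoff:
  fixes X :: "'i \<Rightarrow> 'a \<Rightarrow> real" and f :: "real \<Rightarrow> real" and B \<kappa> c :: real
  assumes nsd: "NSD M I X" and "finite I"
    and rv: "\<And>i. i \<in> I \<Longrightarrow> X i \<in> borel_measurable M"
    and f: "mono f \<or> antimono f" and f_meas[measurable]: "f \<in> borel_measurable borel"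
    and bounded: "\<And>i \<omega>. i \<in> I \<Longrightarrow> \<omega> \<in> space M \<Longrightarrow> f (X i \<omega>) \<le> B"
    and mgf: "\<And>i. i \<in> I \<Longrightarrow> expectation (\<lambda>\<omega>. exp (f (X i \<omega>))) \<le> exp \<kappa>"
  shows "prob {\<omega> \<in> space M. c \<le> (\<Sum>i\<in>I. f (X i \<omega>))} \<le> exp (card I * \<kappa> - c)"
proof -
  let ?S = "\<lambda>\<omega>. \<Sum>i\<in>I. f (X i \<omega>)"
  have S_meas: "?S \<in> borel_measurable M"
    using rv by (intro borel_measurable_sum measurable_compose[OF _ f_meas])
  have "?S \<omega> \<le> (\<Sum>i\<in>I. B)" if "\<omega> \<in> space M" for \<omega>
    using bounded[OF _ that] by (intro sum_mono)
  then have "integrable M (\<lambda>\<omega>. exp (?S \<omega>))"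
    using S_meas by (intro integrable_const_bound[where B="exp (\<Sum>i\<in>I. B)"]) (auto intro!: AE_I2)
  then have "prob {\<omega> \<in> space M. exp c \<le> exp (?S \<omega>)} \<le> expectation (\<lambda>\<omega>. exp (?S \<omega>)) / exp c"
    by (intro integral_Markov_inequality_measure[OF _ sets.top]) auto
  also have "expectation (\<lambda>\<omega>. exp (?S \<omega>)) \<le> (\<Prod>i\<in>I. expectation (\<lambda>\<omega>. exp (f (X i \<omega>))))"
    by (rule NSD_expectation_exp_sum_le[OF nsd \<open>finite I\<close> rv f f_meas bounded])
  also have "\<dots> \<le> (\<Prod>i\<in>I. exp \<kappa>)"
    using mgf by (intro prod_mono) (auto intro: integral_nonneg_AE)
  also have "(\<Prod>i\<in>I. exp \<kappa>) / exp c = exp (card I * \<kappa> - c)"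
    by (simp add: exp_diff exp_of_nat_mult)
  finally show ?thesis by (simp add: divide_right_mono)
qed

lemma AE_eventually_le_of_summable:
  fixes Y :: "nat \<Rightarrow> 'a \<Rightarrow> real" and e :: "nat \<Rightarrow> real"
  assumes [measurable]: "\<And>n. Y n \<in> borel_measurable M"
    and "summable (\<lambda>n. prob {\<omega> \<in> space M. e n < Y n \<omega>})"
  shows "AE \<omega> in M. eventually (\<lambda>n. Y n \<omega> \<le> e n) sequentially"
proof -
  have "AE \<omega> in M. eventually (\<lambda>n. \<omega> \<in> space M - {\<omega> \<in> space M. e n < Y n \<omega>}) sequentially"
    using assms(2) by (intro borel_cantelli_AE1) (auto simp: less_top[symmetric])
  then show ?thesis
    by (rule AE_mp) (auto intro!: AE_I2 elim: eventually_mono simp: not_less)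
qed

end

locale nsd_moment_family = prob_space +
  fixes I :: "'i set" and X :: "'i \<Rightarrow> 'a \<Rightarrow> real" and \<mu> s :: real
  assumes nsd: "NSD M I X" and finite: "finite I"
    and rv: "\<And>i. i \<in> I \<Longrightarrow> X i \<in> borel_measurable M"
    and nonneg: "\<And>i \<omega>. i \<in> I \<Longrightarrow> \<omega> \<in> space M \<Longrightarrow> 0 \<le> X i \<omega>"
    and integrable: "\<And>i. i \<in> I \<Longrightarrow> integrable M (X i)"
    and integrable_sq: "\<And>i. i \<in> I \<Longrightarrow> integrable M (\<lambda>\<omega>. (X i \<omega>)\<^sup>2)"
    and mean: "\<And>i. i \<in> I \<Longrightarrow> expectation (X i) = \<mu>"
    and second_moment: "\<And>i. i \<in> I \<Longrightarrow> expectation (\<lambda>\<omega>. (X i \<omega>)\<^sup>2) \<le> s"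
begin

lemma exp_neg_moment_le:
  fixes l :: real
  assumes i: "i \<in> I" and "0 < l"
  shows "expectation (\<lambda>\<omega>. exp (- l * X i \<omega>)) \<le> exp (- l * \<mu> + l\<^sup>2 * s)"
proof -
  have "expectation (\<lambda>\<omega>. exp (- l * X i \<omega>))
      \<le> exp (expectation (\<lambda>\<omega>. - l * X i \<omega>) + expectation (\<lambda>\<omega>. (- l * X i \<omega>)\<^sup>2))"
  proof (rule expectation_exp_le)
    fix \<omega> assume "\<omega> \<in> space M"
    then show "- l * X i \<omega> \<le> 1"
      using mult_nonneg_nonneg[OF less_imp_le[OF \<open>0 < l\<close>] nonneg[OF i \<open>\<omega> \<in> space M\<close>]] by simp
  qed (use integrable[OF i] integrable_sq[OF i] in \<open>auto simp: power_mult_distrib\<close>)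
  also have "\<dots> \<le> exp (- l * \<mu> + l\<^sup>2 * s)"
    using mean[OF i] second_moment[OF i] by (simp add: power_mult_distrib mult_left_mono)
  finally show ?thesis .
qed

lemma exp_truncated_moment_le:
  fixes l :: real
  assumes i: "i \<in> I" and "0 < l"
  shows "expectation (\<lambda>\<omega>. exp (l * min (X i \<omega>) (1 / l))) \<le> exp (l * \<mu> + l\<^sup>2 * s)"
proof -
  define Y where "Y \<omega> = l * min (X i \<omega>) (1 / l)" for \<omega>
  have Y_le: "0 \<le> Y \<omega>" "Y \<omega> \<le> 1" "Y \<omega> \<le> l * X i \<omega>" if "\<omega> \<in> space M" for \<omega>
    using nonneg[OF i that] \<open>0 < l\<close> by (auto simp: Y_def min_def field_simps)
  have "Y \<in> borel_measurable M" using rv[OF i] unfolding Y_def by measurable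
  then have int_Y: "integrable M Y" "integrable M (\<lambda>\<omega>. (Y \<omega>)\<^sup>2)"
    using Y_le by (auto intro!: integrable_const_bound[where B=1] AE_I2 power_le_one)
  have "expectation (\<lambda>\<omega>. exp (Y \<omega>)) \<le> exp (expectation Y + expectation (\<lambda>\<omega>. (Y \<omega>)\<^sup>2))"
    using int_Y Y_le by (intro expectation_exp_le) auto
  also have "expectation Y \<le> expectation (\<lambda>\<omega>. l * X i \<omega>)"
    using int_Y integrable[OF i] Y_le by (intro integral_mono) auto
  also have "expectation (\<lambda>\<omega>. (Y \<omega>)\<^sup>2) \<le> expectation (\<lambda>\<omega>. l\<^sup>2 * (X i \<omega>)\<^sup>2)"
  proof (rule integral_mono)
    fix \<omega> assume "\<omega> \<in> space M"
    then have "(Y \<omega>)\<^sup>2 \<le> (l * X i \<omega>)\<^sup>2" using Y_le by (intro power_mono) auto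
    then show "(Y \<omega>)\<^sup>2 \<le> l\<^sup>2 * (X i \<omega>)\<^sup>2" by (simp add: power_mult_distrib)
  qed (use int_Y integrable_sq[OF i] in auto)
  also have "exp (expectation (\<lambda>\<omega>. l * X i \<omega>) + expectation (\<lambda>\<omega>. l\<^sup>2 * (X i \<omega>)\<^sup>2))
      \<le> exp (l * \<mu> + l\<^sup>2 * s)"
    using mean[OF i] second_moment[OF i] by (simp add: mult_left_mono)
  finally show ?thesis by (simp add: Y_def)
qed

lemma lower_tail:
  fixes l \<epsilon> :: real
  assumes "0 < l"
  shows "prob {\<omega> \<in> space M. (\<Sum>i\<in>I. X i \<omega>) \<le> card I * \<mu> - \<epsilon>} \<le> exp (card I * l\<^sup>2 * s - l * \<epsilon>)"
proof -
  have "{\<omega> \<in> space M. (\<Sum>i\<in>I. X i \<omega>) \<le> card I * \<mu> - \<epsilon>}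
      = {\<omega> \<in> space M. - l * (card I * \<mu> - \<epsilon>) \<le> (\<Sum>i\<in>I. - l * X i \<omega>)}"
    using \<open>0 < l\<close> by (auto simp: sum_negf mult_le_cancel_left simp flip: sum_distrib_left)
  also have "prob \<dots> \<le> exp (card I * (- l * \<mu> + l\<^sup>2 * s) - - l * (card I * \<mu> - \<epsilon>))"
    using nonneg \<open>0 < l\<close>
    by (intro NSD_chernoff[OF nsd finite rv _ _ _ exp_neg_moment_le, where B=0])
      (auto simp: antimono_def mult_le_0_iff)
  also have "card I * (- l * \<mu> + l\<^sup>2 * s) - - l * (card I * \<mu> - \<epsilon>) = card I * l\<^sup>2 * s - l * \<epsilon>"
    by (simp add: algebra_simps)
  finally show ?thesis .
qed

lemma truncated_upper_tail:
  fixes l \<epsilon> :: real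
  assumes "0 < l"
  shows "prob {\<omega> \<in> space M. card I * \<mu> + \<epsilon> \<le> (\<Sum>i\<in>I. min (X i \<omega>) (1 / l))}
           \<le> exp (card I * l\<^sup>2 * s - l * \<epsilon>)"
proof -
  have "{\<omega> \<in> space M. card I * \<mu> + \<epsilon> \<le> (\<Sum>i\<in>I. min (X i \<omega>) (1 / l))}
      = {\<omega> \<in> space M. l * (card I * \<mu> + \<epsilon>) \<le> (\<Sum>i\<in>I. l * min (X i \<omega>) (1 / l))}"
    using \<open>0 < l\<close> by (auto simp: sum_distrib_left[symmetric])
  also have "prob \<dots> \<le> exp (card I * (l * \<mu> + l\<^sup>2 * s) - l * (card I * \<mu> + \<epsilon>))"
  proof (rule NSD_chernoff[OF nsd finite rv _ _ _ exp_truncated_moment_le, where B=1])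
    show "mono (\<lambda>x. l * min x (1 / l)) \<or> antimono (\<lambda>x. l * min x (1 / l))"
      using \<open>0 < l\<close> by (intro disjI1 monoI mult_left_mono min.mono) auto
  qed (use \<open>0 < l\<close> in \<open>auto simp: min_def field_simps\<close>)
  also have "card I * (l * \<mu> + l\<^sup>2 * s) - l * (card I * \<mu> + \<epsilon>) = card I * l\<^sup>2 * s - l * \<epsilon>"
    by (simp add: algebra_simps)
  finally show ?thesis .
qed

end

section \<open>Almost sure uniform closeness of the partial sums\<close>

lemma grid_deviation_partial_sums_gt:
  fixes x :: "nat \<Rightarrow> real" and \<epsilon> b :: real
  assumes dev: "\<epsilon> < grid_deviation (\<lambda>m. \<Sum>j=1..m. x j) n" and "0 < \<epsilon>"
    and small: "\<And>j. j \<in> {1..n} \<Longrightarrow> x j \<le> b"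
  shows "\<exists>m\<in>{1..n}. (\<Sum>j=1..m. x j) \<le> m / n - \<epsilon> \<or> m / n + \<epsilon> \<le> (\<Sum>j=1..m. min (x j) b)"
proof -
  obtain m where "m \<le> n" and m_dev: "\<epsilon> < \<bar>(\<Sum>j=1..m. x j) - m / n\<bar>"
    using dev grid_deviation_le_iff[of "\<lambda>m. \<Sum>j=1..m. x j" n \<epsilon>] by (auto simp: not_le)
  then have "m \<in> {1..n}" using \<open>0 < \<epsilon>\<close> by (cases "m = 0") auto
  moreover have "(\<Sum>j=1..m. min (x j) b) = (\<Sum>j=1..m. x j)"
    using small \<open>m \<le> n\<close> by (intro sum.cong) auto
  ultimately show ?thesis using m_dev by (intro bexI[of _ m]) linarith+
qed

locale nsd_row = prob_space +
  fixes X :: "nat \<Rightarrow> 'a \<Rightarrow> real" and n :: nat and r C :: real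
  assumes n: "1 \<le> n" and r: "0 < r" and C: "0 \<le> C"
    and rv[measurable]: "\<And>j. j \<in> {1..n} \<Longrightarrow> X j \<in> borel_measurable M"
    and nonneg: "\<And>j \<omega>. j \<in> {1..n} \<Longrightarrow> \<omega> \<in> space M \<Longrightarrow> 0 \<le> X j \<omega>"
    and mean: "\<And>j. j \<in> {1..n} \<Longrightarrow> expectation (X j) = 1 / n"
    and moment_integrable: "\<And>j. j \<in> {1..n} \<Longrightarrow> integrable M (\<lambda>\<omega>. X j \<omega> powr (2 + r))"
    and moment: "\<And>j. j \<in> {1..n} \<Longrightarrow> expectation (\<lambda>\<omega>. X j \<omega> powr (2 + r)) \<le> C / n powr (2 + r)"
    and nsd: "\<And>m. m \<le> n \<Longrightarrow> NSD M {1..m} X"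
begin

lemma integrable_X:
  assumes j: "j \<in> {1..n}"
  shows "integrable M (X j)"
  using integrable_powr_of_le[OF rv[OF j] nonneg[OF j] moment_integrable[OF j], of 1] r nonneg[OF j]
  by (simp add: powr_one cong: Bochner_Integration.integrable_cong)

lemma second_moment:
  assumes j: "j \<in> {1..n}"
  shows "integrable M (\<lambda>\<omega>. (X j \<omega>)\<^sup>2)" and "expectation (\<lambda>\<omega>. (X j \<omega>)\<^sup>2) \<le> (C + 1) / (real n)\<^sup>2"
proof -
  have c: "0 < 1 / real n" using n by simp
  note moment_le = power2_moment_le[OF rv[OF j] nonneg[OF j] moment_integrable[OF j] _ c]
  show "integrable M (\<lambda>\<omega>. (X j \<omega>)\<^sup>2)" using moment_le(1) r by simp
  have "expectation (\<lambda>\<omega>. (X j \<omega>)\<^sup>2) \<le> (1 / n)\<^sup>2 + expectation (\<lambda>\<omega>. X j \<omega> powr (2 + r)) / (1 / n) powr r"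
    using moment_le(2) r by simp
  also have "\<dots> \<le> (1 / n)\<^sup>2 + C / n powr (2 + r) / (1 / n) powr r"
    using moment[OF j] by (intro add_left_mono divide_right_mono) auto
  also have "C / n powr (2 + r) / (1 / n) powr r = C / (real n)\<^sup>2"
    using n by (simp add: powr_divide powr_add field_simps flip: powr_numeral)
  finally show "expectation (\<lambda>\<omega>. (X j \<omega>)\<^sup>2) \<le> (C + 1) / (real n)\<^sup>2"
    by (simp add: power_divide add_divide_distrib)
qed

lemma moment_family:
  assumes "m \<le> n"
  shows "nsd_moment_family M {1..m} X (1 / n) ((C + 1) / (real n)\<^sup>2)"
proof unfold_locales
  show "NSD M {1..m} X" using nsd[OF \<open>m \<le> n\<close>] .
  show "finite {1..m}" by simp
  fix i assume "i \<in> {1..m}"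
  then have i: "i \<in> {1..n}" using \<open>m \<le> n\<close> by auto
  show "X i \<in> borel_measurable M" "integrable M (X i)" "expectation (X i) = 1 / n"
    "integrable M (\<lambda>\<omega>. (X i \<omega>)\<^sup>2)" "expectation (\<lambda>\<omega>. (X i \<omega>)\<^sup>2) \<le> (C + 1) / (real n)\<^sup>2"
    using rv[OF i] integrable_X[OF i] mean[OF i] second_moment[OF i] by auto
  show "0 \<le> X i \<omega>" if "\<omega> \<in> space M" for \<omega> using nonneg[OF i that] .
qed

lemma tail_exponent_le:
  fixes l \<epsilon> :: real
  assumes "m \<le> n" "l\<^sup>2 \<le> n"
  shows "m * l\<^sup>2 * ((C + 1) / (real n)\<^sup>2) - l * \<epsilon> \<le> C + 1 - l * \<epsilon>"
proof -
  have "m * l\<^sup>2 * ((C + 1) / (real n)\<^sup>2) \<le> real n * real n * ((C + 1) / (real n)\<^sup>2)"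
  proof (rule mult_right_mono)
    show "real m * l\<^sup>2 \<le> real n * real n" using assms by (intro mult_mono) auto
  qed (use C in simp)
  also have "\<dots> = C + 1" using n by (simp add: power2_eq_square)
  finally show ?thesis by simp
qed

lemma partial_sum_lower_tail:
  fixes l \<epsilon> :: real
  assumes "m \<le> n" and "0 < l" and "l\<^sup>2 \<le> n"
  shows "prob {\<omega> \<in> space M. (\<Sum>j=1..m. X j \<omega>) \<le> m / n - \<epsilon>} \<le> exp (C + 1 - l * \<epsilon>)"
proof -
  have "prob {\<omega> \<in> space M. (\<Sum>j\<in>{1..m}. X j \<omega>) \<le> card {1..m} * (1 / n) - \<epsilon>}
      \<le> exp (card {1..m} * l\<^sup>2 * ((C + 1) / (real n)\<^sup>2) - l * \<epsilon>)"
    by (rule nsd_moment_family.lower_tail[OF moment_family[OF \<open>m \<le> n\<close>] \<open>0 < l\<close>])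
  also have "\<dots> \<le> exp (C + 1 - l * \<epsilon>)" using tail_exponent_le[OF assms(1,3)] by simp
  finally show ?thesis by simp
qed

lemma partial_sum_truncated_upper_tail:
  fixes l \<epsilon> :: real
  assumes "m \<le> n" "0 < l" "l\<^sup>2 \<le> n"
  shows "prob {\<omega> \<in> space M. m / n + \<epsilon> \<le> (\<Sum>j=1..m. min (X j \<omega>) (1 / l))} \<le> exp (C + 1 - l * \<epsilon>)"
proof -
  have "prob {\<omega> \<in> space M. card {1..m} * (1 / n) + \<epsilon> \<le> (\<Sum>j\<in>{1..m}. min (X j \<omega>) (1 / l))}
      \<le> exp (card {1..m} * l\<^sup>2 * ((C + 1) / (real n)\<^sup>2) - l * \<epsilon>)"
    by (rule nsd_moment_family.truncated_upper_tail[OF moment_family[OF \<open>m \<le> n\<close>] \<open>0 < l\<close>])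
  also have "\<dots> \<le> exp (C + 1 - l * \<epsilon>)" using tail_exponent_le[OF assms(1,3)] by simp
  finally show ?thesis by simp
qed

lemma large_step_prob_le:
  fixes \<delta> :: real
  assumes "j \<in> {1..n}" "0 < \<delta>"
  shows "prob {\<omega> \<in> space M. \<delta> < X j \<omega>} \<le> C / n powr (2 + r) / \<delta> powr (2 + r)"
proof -
  have "prob {\<omega> \<in> space M. \<delta> < X j \<omega>} \<le> expectation (\<lambda>\<omega>. X j \<omega> powr (2 + r)) / \<delta> powr (2 + r)"
    using assms r by (intro prob_greater_le_powr_moment rv moment_integrable) auto
  also have "\<dots> \<le> C / n powr (2 + r) / \<delta> powr (2 + r)"
    using moment[OF assms(1)] by (intro divide_right_mono) auto
  finally show ?thesis .
qed

lemma large_step_prob_le_powr: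
  assumes "j \<in> {1..n}" and \<theta>_r: "\<theta> * (2 + r) = r / 2"
  shows "prob {\<omega> \<in> space M. 1 / n powr \<theta> < X j \<omega>} \<le> C * n powr (-2 - r/2)"
proof -
  have "(1 / n powr \<theta>) powr (2 + r) = n powr (- \<theta> * (2 + r))"
    by (simp add: powr_powr flip: powr_minus_divide)
  also have "- \<theta> * (2 + r) = - (r/2)" using \<theta>_r by linarith
  finally have "C / n powr (2 + r) / (1 / n powr \<theta>) powr (2 + r) = C * (n powr (- (2 + r)) * n powr (r/2))"
    by (simp only: powr_minus divide_inverse inverse_inverse_eq mult.assoc)
  also have "n powr (- (2 + r)) * n powr (r/2) = n powr (-2 - r/2)"
    by (simp add: add.commute flip: powr_add)
  finally show ?thesis using large_step_prob_le[OF assms(1), of "1 / n powr \<theta>"] n by simp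
qed

lemma deviation_event_subset:
  fixes l \<epsilon> :: real
  assumes "0 < \<epsilon>"
  shows "{\<omega> \<in> space M. \<epsilon> < grid_deviation (\<lambda>m. \<Sum>j=1..m. X j \<omega>) n}
    \<subseteq> (\<Union>j\<in>{1..n}. {\<omega> \<in> space M. 1 / l < X j \<omega>})
      \<union> (\<Union>m\<in>{1..n}. {\<omega> \<in> space M. (\<Sum>j=1..m. X j \<omega>) \<le> m / n - \<epsilon>})
      \<union> (\<Union>m\<in>{1..n}. {\<omega> \<in> space M. m / n + \<epsilon> \<le> (\<Sum>j=1..m. min (X j \<omega>) (1 / l))})"
    (is "_ \<subseteq> ?J \<union> ?L \<union> ?U")
proof
  fix \<omega> assume \<omega>: "\<omega> \<in> {\<omega> \<in> space M. \<epsilon> < grid_deviation (\<lambda>m. \<Sum>j=1..m. X j \<omega>) n}"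
  show "\<omega> \<in> ?J \<union> ?L \<union> ?U"
  proof (cases "\<exists>j\<in>{1..n}. 1 / l < X j \<omega>")
    case False
    then obtain m where "m \<in> {1..n}" and
      "(\<Sum>j=1..m. X j \<omega>) \<le> m / n - \<epsilon> \<or> m / n + \<epsilon> \<le> (\<Sum>j=1..m. min (X j \<omega>) (1 / l))"
      using grid_deviation_partial_sums_gt[of \<epsilon> "\<lambda>j. X j \<omega>" n "1 / l"] \<omega> \<open>0 < \<epsilon>\<close>
      by (auto simp: not_less)
    then show ?thesis using \<omega> by blast
  qed (use \<omega> in blast)
qed

lemma deviation_prob_le_union_bound:
  fixes l \<epsilon> :: real
  assumes "0 < \<epsilon>"
  shows "prob {\<omega> \<in> space M. \<epsilon> < grid_deviation (\<lambda>m. \<Sum>j=1..m. X j \<omega>) n}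
    \<le> (\<Sum>j\<in>{1..n}. prob {\<omega> \<in> space M. 1 / l < X j \<omega>})
      + (\<Sum>m\<in>{1..n}. prob {\<omega> \<in> space M. (\<Sum>j=1..m. X j \<omega>) \<le> m / n - \<epsilon>})
      + (\<Sum>m\<in>{1..n}. prob {\<omega> \<in> space M. m / n + \<epsilon> \<le> (\<Sum>j=1..m. min (X j \<omega>) (1 / l))})"
proof -
  let ?J = "\<Union>j\<in>{1..n}. {\<omega> \<in> space M. 1 / l < X j \<omega>}"
  let ?L = "\<Union>m\<in>{1..n}. {\<omega> \<in> space M. (\<Sum>j=1..m. X j \<omega>) \<le> m / n - \<epsilon>}"
  let ?U = "\<Union>m\<in>{1..n}. {\<omega> \<in> space M. m / n + \<epsilon> \<le> (\<Sum>j=1..m. min (X j \<omega>) (1 / l))}"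
  have J_sets: "{\<omega> \<in> space M. 1 / l < X j \<omega>} \<in> sets M" if "j \<in> {1..n}" for j
    using that by measurable
  have L_sets: "{\<omega> \<in> space M. (\<Sum>j=1..m. X j \<omega>) \<le> m / n - \<epsilon>} \<in> sets M"
    and U_sets: "{\<omega> \<in> space M. m / n + \<epsilon> \<le> (\<Sum>j=1..m. min (X j \<omega>) (1 / l))} \<in> sets M"
    if "m \<in> {1..n}" for m
    by (measurable; use that in auto)+
  have "prob {\<omega> \<in> space M. \<epsilon> < grid_deviation (\<lambda>m. \<Sum>j=1..m. X j \<omega>) n} \<le> prob (?J \<union> ?L \<union> ?U)"
    using deviation_event_subset[OF \<open>0 < \<epsilon>\<close>] J_sets L_sets U_sets by (intro finite_measure_mono) auto
  also have "\<dots> \<le> prob ?J + prob ?L + prob ?U"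
    using J_sets L_sets U_sets by (intro order.trans[OF measure_Un_le add_right_mono[OF measure_Un_le]]) auto
  also have "\<dots> \<le> (\<Sum>j\<in>{1..n}. prob {\<omega> \<in> space M. 1 / l < X j \<omega>})
      + (\<Sum>m\<in>{1..n}. prob {\<omega> \<in> space M. (\<Sum>j=1..m. X j \<omega>) \<le> m / n - \<epsilon>})
      + (\<Sum>m\<in>{1..n}. prob {\<omega> \<in> space M. m / n + \<epsilon> \<le> (\<Sum>j=1..m. min (X j \<omega>) (1 / l))})"
    using J_sets L_sets U_sets by (intro add_mono measure_UNION_le) auto
  finally show ?thesis .
qed

text \<open>
  With truncation level \<open>1 / l = n powr -\<theta>\<close> and deviation \<open>\<epsilon> = n powr (-\<theta>/2)\<close>, the choice
  \<open>\<theta> = r / (4 + 2 r)\<close> makes \<open>\<theta> (2 + r) = r/2\<close>, so that \<open>n\<close> large steps cost \<open>C n powr (-1 - r/2)\<close>,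
  while \<open>2 \<theta> \<le> 1\<close> gives \<open>l\<^sup>2 \<le> n\<close> in the Chernoff exponent.
\<close>

lemma partial_sums_deviation_prob_le:
  assumes \<theta>: "\<theta> = r / (4 + 2 * r)"
  shows "prob {\<omega> \<in> space M. real n powr (-\<theta>/2) < grid_deviation (\<lambda>m. \<Sum>j=1..m. X j \<omega>) n}
           \<le> C * real n powr (-1 - r/2) + 2 * real n * exp (C + 1 - real n powr (\<theta>/2))"
proof -
  define l where "l = n powr \<theta>"
  define \<epsilon> where "\<epsilon> = n powr (-\<theta>/2)"
  have n_pos: "0 < real n" "1 \<le> real n" using n by auto
  have "0 < l" "0 < \<epsilon>" using n_pos by (simp_all add: l_def \<epsilon>_def)
  have "2 * \<theta> \<le> 1" and \<theta>_r: "\<theta> * (2 + r) = r / 2" using r by (auto simp: \<theta> field_simps)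
  have "l\<^sup>2 = n powr (\<theta> + \<theta>)" by (simp only: l_def power2_eq_square powr_add)
  also have "\<dots> \<le> n powr 1" using n_pos \<open>2 * \<theta> \<le> 1\<close> by (intro powr_mono) auto
  finally have "l\<^sup>2 \<le> n" using n_pos by simp
  have "n powr (\<theta>/2) = n powr (\<theta> + - \<theta>/2)" by simp
  then have l\<epsilon>: "l * \<epsilon> = n powr (\<theta>/2)" by (simp only: l_def \<epsilon>_def powr_add)
  have step: "prob {\<omega> \<in> space M. 1 / l < X j \<omega>} \<le> C * n powr (-2 - r/2)" if "j \<in> {1..n}" for j
    unfolding l_def using that \<theta>_r by (rule large_step_prob_le_powr)
  have "prob {\<omega> \<in> space M. \<epsilon> < grid_deviation (\<lambda>m. \<Sum>j=1..m. X j \<omega>) n}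
    \<le> (\<Sum>j\<in>{1..n}. prob {\<omega> \<in> space M. 1 / l < X j \<omega>})
      + (\<Sum>m\<in>{1..n}. prob {\<omega> \<in> space M. (\<Sum>j=1..m. X j \<omega>) \<le> m / n - \<epsilon>})
      + (\<Sum>m\<in>{1..n}. prob {\<omega> \<in> space M. m / n + \<epsilon> \<le> (\<Sum>j=1..m. min (X j \<omega>) (1 / l))})"
    by (rule deviation_prob_le_union_bound[OF \<open>0 < \<epsilon>\<close>])
  also have "\<dots> \<le> (\<Sum>j\<in>{1..n}. C * n powr (-2 - r/2)) + (\<Sum>m\<in>{1..n}. exp (C + 1 - l * \<epsilon>))
      + (\<Sum>m\<in>{1..n}. exp (C + 1 - l * \<epsilon>))"
    using \<open>0 < l\<close> \<open>l\<^sup>2 \<le> n\<close>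
    by (intro add_mono sum_mono step partial_sum_lower_tail partial_sum_truncated_upper_tail) auto
  also have "(\<Sum>j\<in>{1..n}. C * n powr (-2 - r/2)) = C * (n powr 1 * n powr (-2 - r/2))"
    using n_pos by simp
  also have "n powr 1 * n powr (-2 - r/2) = n powr (-1 - r/2)"
    by (simp only: flip: powr_add) simp
  finally show ?thesis
    unfolding \<epsilon>_def[symmetric] l\<epsilon>[symmetric] by simp
qed

end

lemma power_divide_le_exp:
  fixes y :: real
  assumes "0 \<le> y" "0 < k"
  shows "(y / real k) ^ k \<le> exp y"
proof -
  have "y / real k \<le> exp (y / real k)"
    using exp_ge_add_one_self[of "y / real k"] by linarith
  then have "(y / real k) ^ k \<le> exp (y / real k) ^ k"
    using assms by (intro power_mono) auto
  also have "\<dots> = exp y"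
    using assms by (simp flip: exp_of_nat_mult)
  finally show ?thesis .
qed

lemma summable_mult_exp_neg_powr:
  fixes s :: real
  assumes "0 < s"
  shows "summable (\<lambda>n. real n * exp (- (real n powr s)))"
proof -
  obtain k :: nat where "0 < k" "3 \<le> k * s"
  proof -
    obtain k :: nat where "3 / s < k" using reals_Archimedean2 by blast
    then have "0 < k" "3 \<le> k * s"
      using \<open>0 < s\<close> by (auto simp: field_simps intro!: Nat.gr0I)
    then show ?thesis using that by blast
  qed
  have bound: "real n * exp (- (real n powr s)) \<le> real k ^ k * inverse (real n ^ 2)" if "1 \<le> n" for n
  proof -
    have n: "1 \<le> real n" using that by simp
    have "real n ^ 3 = real n powr 3" using n by (simp add: powr_numeral)
    also have "\<dots> \<le> real n powr (real k * s)" using n \<open>3 \<le> k * s\<close> by (intro powr_mono) auto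
    also have "\<dots> = (real n powr s) ^ k" using n by (simp add: powr_power)
    also have "\<dots> = real k ^ k * (real n powr s / real k) ^ k"
      using \<open>0 < k\<close> by (simp add: power_divide)
    also have "\<dots> \<le> real k ^ k * exp (real n powr s)"
      using \<open>0 < k\<close> by (intro mult_left_mono power_divide_le_exp) auto
    finally have "real n ^ 3 \<le> real k ^ k * exp (real n powr s)" .
    then show ?thesis using n by (simp add: exp_minus field_simps power3_eq_cube power2_eq_square)
  qed
  have "summable (\<lambda>n. real k ^ k * inverse (real n ^ 2))"
    by (intro summable_mult inverse_power_summable) simp
  then show ?thesis
  proof (rule summable_comparison_test'[where N=1])
    fix n :: nat assume "1 \<le> n"
    then show "norm (real n * exp (- (real n powr s))) \<le> real k ^ k * inverse (real n ^ 2)"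
      using bound by simp
  qed
qed

lemma summable_deviation_bound:
  fixes r C \<theta> :: real
  assumes "0 < r" "0 < \<theta>"
  shows "summable (\<lambda>n. C * real n powr (-1 - r/2) + 2 * real n * exp (C + 1 - real n powr (\<theta>/2)))"
proof (rule summable_add)
  show "summable (\<lambda>n. C * real n powr (-1 - r/2))"
    using \<open>0 < r\<close> by (intro summable_mult) (simp add: summable_real_powr_iff)
  have "summable (\<lambda>n. 2 * exp (C + 1) * (real n * exp (- (real n powr (\<theta>/2)))))"
    using \<open>0 < \<theta>\<close> by (intro summable_mult summable_mult_exp_neg_powr) simp
  moreover have "exp (C + 1 - x) = exp (C + 1) * exp (- x)" for x :: real
    by (simp add: exp_diff exp_minus divide_inverse)
  ultimately show "summable (\<lambda>n. 2 * real n * exp (C + 1 - real n powr (\<theta>/2)))"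
    by (simp add: mult_ac)
qed

theorem theorem2p2:
  fixes M :: "'a measure"
    and t :: "nat \<Rightarrow> nat \<Rightarrow> 'a \<Rightarrow> real"
    and W :: "real \<Rightarrow> 'a \<Rightarrow> real"
    and a r C :: real
  assumes "prob_space M"
    and rv: "\<And>N j. N \<ge> 1 \<Longrightarrow> j \<ge> 1 \<Longrightarrow> t N j \<in> borel_measurable M"
    and pos: "\<And>N j \<omega>. N \<ge> 1 \<Longrightarrow> j \<ge> 1 \<Longrightarrow> \<omega> \<in> space M \<Longrightarrow> t N j \<omega> > 0"
    and mean: "\<And>N j. N \<ge> 1 \<Longrightarrow> j \<ge> 1 \<Longrightarrow> integral\<^sup>L M (t N j) = 1 / real N"
    and "r > 0" and "C > 0"
    and mom_int: "\<And>N j. N \<ge> 1 \<Longrightarrow> j \<ge> 1 \<Longrightarrow> integrable M (\<lambda>\<omega>. t N j \<omega> powr (2 + r))"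
    and mom: "\<And>N j. N \<ge> 1 \<Longrightarrow> j \<ge> 1 \<Longrightarrow>
               (\<integral>\<omega>. t N j \<omega> powr (2 + r) \<partial>M) \<le> C / real N powr (2 + r)"
    and nsd: "\<And>N m. N \<ge> 1 \<Longrightarrow> NSD M {1..m} (t N)"
    and W_rv: "\<And>s. s \<ge> 0 \<Longrightarrow> W s \<in> borel_measurable M"
    and W_cont: "AE \<omega> in M. continuous_on {0..} (\<lambda>s. W s \<omega>)"
  shows "AE \<omega> in M.
     ((\<lambda>N. real N *
        ((\<Sum>i=1..N. (a * (\<Sum>j=1..i. t N j \<omega>)
                       + W (\<Sum>j=1..i. t N j \<omega>) \<omega> - W (\<Sum>j=1..i-1. t N j \<omega>) \<omega>)
                     * (\<Sum>j=1..i. t N j \<omega>))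
          / (\<Sum>i=1..N. (\<Sum>j=1..i. t N j \<omega>)^2) - a))
      \<longlonglongrightarrow> 3 * integral {0..1} (\<lambda>s. W 1 \<omega> - W s \<omega>))"
proof -
  \<comment> \<open>The convergence is proved path by path.\<close>
  interpret prob_space M by fact
  define \<theta> where "\<theta> = r / (4 + 2 * r)"
  have "0 < \<theta>" using \<open>r > 0\<close> by (simp add: \<theta>_def)
  let ?dev = "\<lambda>N \<omega>. grid_deviation (\<lambda>i. \<Sum>j=1..i. t N j \<omega>) N"
  have "summable (\<lambda>N. prob {\<omega> \<in> space M. real N powr (-\<theta>/2) < ?dev N \<omega>})"
    using summable_deviation_bound[OF \<open>r > 0\<close> \<open>0 < \<theta>\<close>, of C]
  proof (rule summable_comparison_test'[where N=1])
    fix N :: nat assume "1 \<le> N"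
    then interpret nsd_row M "t N" N r C
      using \<open>r > 0\<close> \<open>C > 0\<close> nsd[OF \<open>1 \<le> N\<close>]
      by unfold_locales (auto intro: rv mom_int mom less_imp_le[OF pos] simp: mean)
    show "norm (prob {\<omega> \<in> space M. real N powr (-\<theta>/2) < ?dev N \<omega>})
        \<le> C * real N powr (-1 - r/2) + 2 * real N * exp (C + 1 - real N powr (\<theta>/2))"
      using partial_sums_deviation_prob_le[OF \<theta>_def] by simp
  qed
  then have "AE \<omega> in M. eventually (\<lambda>N. ?dev N \<omega> \<le> real N powr (-\<theta>/2)) sequentially"
    using rv by (intro AE_eventually_le_of_summable borel_measurable_grid_deviation borel_measurable_sum) auto
  with AE_space W_cont show ?thesis
  proof eventually_elim
    case (elim \<omega>)
    have "(\<lambda>N. real N powr (-\<theta>/2)) \<longlonglongrightarrow> 0"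
      using \<open>0 < \<theta>\<close> by (intro tendsto_neg_powr filterlim_real_sequentially) simp
    then have "near_uniform_partitions (\<lambda>N i. \<Sum>j=1..i. t N j \<omega>)"
      using pos elim(1,3) by (intro near_uniform_partitions_partial_sums less_imp_le) auto
    from near_uniform_partitions.least_squares_error_tendsto[OF this elim(2)] show ?case .
  qed
qed

end
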